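(* Assume the new-symbol weights are of product form $w^t_i=u(i)\,v(m_t)$. Let $x_{1:n}\in\mathcal X^n$ ($n\ge1$) have used alphabet size $m$ and counts $n_j$. Then the redundancy of the adaptive model $S^{\vec\beta^*}$ satisfies $$R^{\vec\beta^*}_S(x_{1:n}) \le \mathrm{CL}_w(\mathcal A) - (m-1)\ln m + \sum_{j\in\mathcal A}\tfrac12\ln n_j - \tfrac12\ln n + \tfrac32\,m\ln\ln\frac{2n}{m} + 2.33\,m + 0.86 .$$
   Context: Let $\mathcal X$ be a finite base alphabet. For $x_{1:n}\in\mathcal X^n$, let $n_i$ be the number of occurrences of $i$ in $x_{1:n}$, $\mathcal A=\{x_1,\dots,x_n\}$, $m=|\mathcal A|$. For $0\le t\le n$ let $\mathcal A_t=\{x_1,\dots,x_t\}$ ($\mathcal A_0=\emptyset$), $m_t=|\mathcal A_t|$, $n^t_i$ the number of occurrences of $i$ in $x_{1:t}$. Product-form weights: $u:\mathcal X\to(0,\infty)$ and $v:\{0,1,\dots\}\to(0,\infty)$ such that $w^t_i:=u(i)v(m_t)$ satisfies $\sum_{k\in\mathcal X\setminus\mathcal A_t}w^t_k\le1$ for all $t$. Adaptive model: $\beta^*_t:=m_t/\ln\frac{t+1}{m_t}$ for $t\ge1$, and $\beta^*_0\in(0,\infty)$ arbitrary; $S^{\vec\beta^*}(x_{t+1}=i\mid x_{1:t})=n^t_i/(t+\beta^*_t)$ if $n^t_i>0$ and $\beta^*_t w^t_i/(t+\beta^*_t)$ if $n^t_i=0$; $S^{\vec\beta^*}(x_{1:n})=\prod_{t=0}^{n-1}S^{\vec\beta^*}(x_{t+1}\mid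 x_{1:t})$. $\mathrm{CL}_w(\mathcal A):=\sum_{t\in\{0,\dots,n-1\}:\,x_{t+1}\notin\mathcal A_t}\ln(1/w^t_{x_{t+1}})$. Redundancy $R^{\vec\beta^*}_S(x_{1:n}):=\ln\big(n^{-n}\prod_{j\in\mathcal A}n_j^{n_j}\big)-\ln S^{\vec\beta^*}(x_{1:n})$. Natural logarithms. *)

theory Defs
  imports "HOL-Analysis.Analysis"
begin

text \<open>A sequence x_{1:n} is a list xs of length n; x_{t+1} = xs ! t.\<close>

definition alph :: "'a list \<Rightarrow> nat \<Rightarrow> 'a set" where
  "alph xs t = set (take t xs)"

definition msz :: "'a list \<Rightarrow> nat \<Rightarrow> nat" where
  "msz xs t = card (alph xs t)"

definition cnt :: "'a list \<Rightarrow> nat \<Rightarrow> 'a \<Rightarrow> nat" where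
  "cnt xs t i = length (filter (\<lambda>y. y = i) (take t xs))"

definition wt :: "('a \<Rightarrow> real) \<Rightarrow> (nat \<Rightarrow> real) \<Rightarrow> 'a list \<Rightarrow> nat \<Rightarrow> 'a \<Rightarrow> real" where
  "wt u v xs t i = u i * v (msz xs t)"

definition beta_star :: "real \<Rightarrow> 'a list \<Rightarrow> nat \<Rightarrow> real" where
  "beta_star b0 xs t = (if t = 0 then b0
     else real (msz xs t) / ln (real (t + 1) / real (msz xs t)))"

definition S_cond :: "real \<Rightarrow> ('a \<Rightarrow> real) \<Rightarrow> (nat \<Rightarrow> real) \<Rightarrow> 'a list \<Rightarrow> nat \<Rightarrow> 'a \<Rightarrow> real" where
  "S_cond b0 u v xs t i =
     (if cnt xs t i > 0 then real (cnt xs t i) / (real t + beta_star b0 xs t)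
      else beta_star b0 xs t * wt u v xs t i / (real t + beta_star b0 xs t))"

definition S_seq :: "real \<Rightarrow> ('a \<Rightarrow> real) \<Rightarrow> (nat \<Rightarrow> real) \<Rightarrow> 'a list \<Rightarrow> real" where
  "S_seq b0 u v xs = (\<Prod>t<length xs. S_cond b0 u v xs t (xs ! t))"

definition CL :: "('a \<Rightarrow> real) \<Rightarrow> (nat \<Rightarrow> real) \<Rightarrow> 'a list \<Rightarrow> real" where
  "CL u v xs = (\<Sum>t\<in>{t. t < length xs \<and> xs ! t \<notin> alph xs t}. ln (1 / wt u v xs t (xs ! t)))"

definition redundancy :: "real \<Rightarrow> ('a \<Rightarrow> real) \<Rightarrow> (nat \<Rightarrow> real) \<Rightarrow> 'a list \<Rightarrow> real" where
  "redundancy b0 u v xs =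
     ln (real (length xs) powi (- int (length xs)) *
         (\<Prod>j\<in>set xs. real (cnt xs (length xs) j) ^ cnt xs (length xs) j))
     - ln (S_seq b0 u v xs)"

end

theory Submission
  imports Defs
begin

text \<open>
  The redundancy is ln of the maximum-likelihood probability minus ln of the model
  probability, and both are products over the sequence, so the bound is proved as an invariant:
  redundancy minus CL never exceeds a potential, which for the whole sequence is at most the
  right-hand side minus CL. Appending a symbol with previous count c to a prefix of length n changes
  the maximum-likelihood part by the increments of c ln c and n ln n; the Stirling-type estimates
  1 \<le> (n + 1/2) ln (1 + 1/n) \<le> 1 + 1/(8n(n+1)) turn them into increments of ln c / 2 - 1/(8c) and of
  ln n / 2. What is left is the price of the adaptive parameter: a factor 1 + \<beta>_n/n for a
  repeated symbol and ln((n+1)/m) + m/n for a new one, whose weight cancels against its code length.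
  Both are dominated by the increments of an explicit budget in n and m, namely
  ln (n choose m) + ln (n/m) while n \<le> 3m and (3/2) m ln (ln (n/m) + 1/4) beyond. The entropy bound
  for binomial coefficients finally evaluates the budget.
\<close>

section \<open>Elementary bounds for the logarithm\<close>

lemma ln_one_plus_le_pade:
  fixes z :: real
  assumes "0 \<le> z"
  shows "ln (1 + z) \<le> z * (6 + z) / (6 + 4 * z)"
proof -
  let ?g = "\<lambda>z::real. z * (6 + z) / (6 + 4 * z) - ln (1 + z)"
  have "?g 0 \<le> ?g z"
  proof (rule DERIV_nonneg_imp_increasing_open[OF assms])
    fix x :: real assume x: "0 < x" "x < z"
    have d: "(?g has_real_derivative ((6 + 2*x) * (6 + 4*x) - x*(6+x)*4) / (6+4*x)^2 - 1/(1+x)) (at x)"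
      using x by (auto intro!: derivative_eq_intros simp: power2_eq_square field_simps)
    have "((6 + 2*x) * (6 + 4*x) - x*(6+x)*4) / (6+4*x)^2 - 1/(1+x) = 4*x^3 / ((6+4*x)^2*(1+x))"
      using x by (simp add: divide_simps power2_eq_square power3_eq_cube) algebra
    also have "\<dots> \<ge> 0"
      using x by simp
    finally show "\<exists>y. (?g has_real_derivative y) (at x) \<and> 0 \<le> y"
      using d by blast
  next
    show "continuous_on {0..z} ?g"
      by (intro continuous_intros) (auto simp: add_pos_nonneg)
  qed
  then show ?thesis by simp
qed

lemma pade_le_ln_one_plus:
  fixes z :: real
  assumes "0 \<le> z"
  shows "2 * z / (2 + z) \<le> ln (1 + z)"
proof -
  let ?g = "\<lambda>z::real. ln (1 + z) - 2 * z / (2 + z)"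
  have "?g 0 \<le> ?g z"
  proof (rule DERIV_nonneg_imp_increasing_open[OF assms])
    fix x :: real assume x: "0 < x" "x < z"
    have d: "(?g has_real_derivative 1/(1+x) - (2 * (2 + x) - 2*x) / (2+x)^2) (at x)"
      using x by (auto intro!: derivative_eq_intros simp: power2_eq_square field_simps)
    have "1/(1+x) - (2 * (2 + x) - 2*x) / (2+x)^2 = x^2 / ((2+x)^2*(1+x))"
      using x by (simp add: divide_simps power2_eq_square) algebra
    also have "\<dots> \<ge> 0"
      using x by simp
    finally show "\<exists>y. (?g has_real_derivative y) (at x) \<and> 0 \<le> y"
      using d by blast
  next
    show "continuous_on {0..z} ?g"
      by (intro continuous_intros) (auto simp: add_pos_nonneg)
  qed
  then show ?thesis by simp
qed

lemma one_minus_inverse_le_ln: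
  fixes x :: real
  assumes "0 < x"
  shows "1 - 1 / x \<le> ln x"
  using ln_le_minus_one[of "1/x"] assms by (simp add: ln_div)

lemma ln_diff_ge_div:
  fixes p q :: real
  assumes "0 < q" "0 < p"
  shows "(p - q) / p \<le> ln p - ln q"
  using one_minus_inverse_le_ln[of "p/q"] assms by (simp add: ln_div diff_divide_distrib)

lemma ln_diff_le_div:
  fixes p q :: real
  assumes "0 < q" "0 < p"
  shows "ln p - ln q \<le> (p - q) / q"
  using ln_le_minus_one[of "p/q"] assms by (simp add: ln_div diff_divide_distrib)

lemma ln_one_plus_inverse_eq:
  fixes x :: real
  assumes "0 < x"
  shows "ln (1 + 1 / x) = ln (x + 1) - ln x"
proof -
  have "1 + 1 / x = (x + 1) / x"
    using assms by (simp add: field_simps)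
  then show ?thesis
    using assms by (simp add: ln_div)
qed

lemma ln_one_plus_inverse_ge:
  fixes x :: real
  assumes "0 < x"
  shows "2 / (2 * x + 1) \<le> ln (1 + 1 / x)"
  using pade_le_ln_one_plus[of "1/x"] assms by (simp add: field_simps)

lemma mult_ln_one_plus_div_le:
  fixes K M :: real
  assumes "0 < K" "0 \<le> M"
  shows "K * ln (1 + M / K) \<le> M * (6 * K + M) / (6 * K + 4 * M)"
proof -
  have "K * ln (1 + M / K) \<le> K * ((M / K) * (6 + M / K) / (6 + 4 * (M / K)))"
    using ln_one_plus_le_pade[of "M / K"] assms by (intro mult_left_mono) auto
  also have "\<dots> = M * (6 * K + M) / (6 * K + 4 * M)"
    using assms add_pos_nonneg[of "6 * K" "4 * M"] by (simp add: divide_simps)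
  finally show ?thesis .
qed

lemma mult_ln_one_plus_inverse_ge:
  fixes x :: real
  assumes "0 < x"
  shows "1 \<le> (x + 1/2) * ln (1 + 1 / x)"
proof -
  have "1 = (x + 1/2) * (2 / (2 * x + 1))"
    using assms by (simp add: field_simps)
  also have "\<dots> \<le> (x + 1/2) * ln (1 + 1 / x)"
    using ln_one_plus_inverse_ge[OF assms] assms by (intro mult_left_mono) auto
  finally show ?thesis .
qed

lemma mult_ln_one_plus_inverse_le:
  fixes x :: real
  assumes "0 < x"
  shows "(x + 1/2) * ln (1 + 1 / x) \<le> 1 + 1 / (8 * x * (x + 1))"
proof -
  have "(x + 1/2) * ln (1 + 1 / x) = (1 + 1 / (2 * x)) * (x * ln (1 + 1 / x))"
    using assms by (simp add: field_simps)
  also have "\<dots> \<le> (1 + 1 / (2 * x)) * ((6 * x + 1) / (6 * x + 4))"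
    using mult_ln_one_plus_div_le[of x 1] assms by (intro mult_left_mono) auto
  also have "\<dots> = 1 + 1 / (4 * x * (3 * x + 2))"
    using assms by (simp add: divide_simps) (simp add: algebra_simps)
  also have "\<dots> \<le> 1 + 1 / (8 * x * (x + 1))"
  proof -
    have "8 * x * (x + 1) \<le> 4 * x * (3 * x + 2)"
      using assms by (simp add: algebra_simps)
    then show ?thesis
      using assms by (simp add: frac_le)
  qed
  finally show ?thesis .
qed

lemma stirling_increment_bounds:
  fixes x :: real
  assumes "0 < x"
  shows "1 \<le> x * (ln (x + 1) - ln x) + (ln (x + 1) - ln x) / 2"
    and "x * (ln (x + 1) - ln x) + (ln (x + 1) - ln x) / 2 \<le> 1 + (1 / (8 * x) - 1 / (8 * (x + 1)))"
proof -
  have "x * (ln (x + 1) - ln x) + (ln (x + 1) - ln x) / 2 = (x + 1/2) * ln (1 + 1 / x)"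
    by (simp only: ln_one_plus_inverse_eq[OF assms] distrib_right)
  moreover have "1 / (8 * x * (x + 1)) = 1 / (8 * x) - 1 / (8 * (x + 1))"
    using assms by (simp add: field_simps)
  ultimately show "1 \<le> x * (ln (x + 1) - ln x) + (ln (x + 1) - ln x) / 2"
    and "x * (ln (x + 1) - ln x) + (ln (x + 1) - ln x) / 2 \<le> 1 + (1 / (8 * x) - 1 / (8 * (x + 1)))"
    using mult_ln_one_plus_inverse_ge[OF assms] mult_ln_one_plus_inverse_le[OF assms] by simp_all
qed

lemma ln_three_half_bounds: "2/5 \<le> ln (3/2::real)" "ln (3/2::real) \<le> 13/32"
  using pade_le_ln_one_plus[of "1/2"] ln_one_plus_le_pade[of "1/2"] by simp_all

lemma ln_five_quarter_bounds: "2/9 \<le> ln (5/4::real)" "ln (5/4::real) \<le> 25/112"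
  using pade_le_ln_one_plus[of "1/4"] ln_one_plus_le_pade[of "1/4"] by simp_all

lemma ln_seven_quarter_le: "ln (7/4::real) \<le> 9/16"
  using ln_one_plus_le_pade[of "3/4"] by simp

lemma ln_five_half_bounds: "6/7 \<le> ln (5/2::real)" "ln (5/2::real) \<le> 25/36 + 25/112"
proof -
  show "6/7 \<le> ln (5/2::real)"
    using pade_le_ln_one_plus[of "3/2"] by simp
  have "ln (5/2::real) = ln 2 + ln (5/4)"
    using ln_mult[of "2::real" "5/4"] by simp
  then show "ln (5/2::real) \<le> 25/36 + 25/112"
    using ln2_le_25_over_36 ln_five_quarter_bounds by linarith
qed

lemma ln_three_bounds: "16/15 \<le> ln (3::real)" "ln (3::real) \<le> 25/36 + 13/32"
proof -
  have "ln (3::real) = ln 2 + ln (3/2)"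
    using ln_mult[of "2::real" "3/2"] by simp
  then show "16/15 \<le> ln (3::real)" "ln (3::real) \<le> 25/36 + 13/32"
    using ln2_ge_two_thirds ln2_le_25_over_36 ln_three_half_bounds by linarith+
qed

lemma ln_four_eq: "ln (4::real) = 2 * ln 2"
  using ln_realpow[of "2::real" 2] by simp

lemma ln_five_bounds: "14/9 \<le> ln (5::real)" "ln (5::real) \<le> 25/18 + 25/112"
proof -
  have "ln (5::real) = ln 4 + ln (5/4)"
    using ln_mult[of "4::real" "5/4"] by simp
  then show "14/9 \<le> ln (5::real)" "ln (5::real) \<le> 25/18 + 25/112"
    using ln_four_eq ln2_ge_two_thirds ln2_le_25_over_36 ln_five_quarter_bounds by linarith+
qed

lemma ln_ln_three_bounds: "2/9 \<le> ln (ln 3 + 1/4::real)" "ln (ln 3 + 1/4::real) \<le> 303/1000"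
proof -
  have "ln (5/4::real) \<le> ln (ln 3 + 1/4)"
    using ln_three_bounds by (intro ln_mono) auto
  then show "2/9 \<le> ln (ln 3 + 1/4::real)"
    using ln_five_quarter_bounds by linarith
  define z where "z = ln 3 - (3/4::real)"
  have z: "0 \<le> z" "z \<le> 25/36 + 13/32 - 3/4"
    unfolding z_def using ln_three_bounds by auto
  have "ln (ln 3 + 1/4) = ln (1 + z)"
    unfolding z_def by (simp add: algebra_simps)
  also have "\<dots> \<le> z * (6 + z) / (6 + 4 * z)"
    using z(1) by (rule ln_one_plus_le_pade)
  also have "\<dots> \<le> 303/1000"
  proof -
    have "z * z \<le> (25/36 + 13/32 - 3/4) * z"
      using z by (intro mult_right_mono) auto
    then have "z * (6 + z) \<le> 303/1000 * (6 + 4 * z)"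
      using z by (simp add: algebra_simps)
    then show ?thesis
      using z by (simp add: divide_simps)
  qed
  finally show "ln (ln 3 + 1/4::real) \<le> 303/1000" .
qed

section \<open>Binomial coefficients\<close>

lemma binomial_Suc_Suc_real:
  "real (Suc n choose Suc k) = real (n choose k) * ((real n + 1) / (real k + 1))"
proof -
  have "real (Suc n) * real (n choose k) = real (Suc n choose Suc k) * real (Suc k)"
    using Suc_times_binomial_eq[of n k] by (metis of_nat_mult)
  then show ?thesis by (simp add: field_simps)
qed

lemma binomial_Suc_real:
  assumes "k \<le> n"
  shows "real (Suc n choose k) = real (n choose k) * ((real n + 1) / (real n + 1 - real k))"
proof -
  have "real (Suc n - k) * real (Suc n choose k) = real (Suc n) * real (n choose k)"
    using binomial_absorb_comp[of "Suc n" k] by (metis diff_Suc_1 of_nat_mult)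
  moreover have "real (Suc n - k) = real n + 1 - real k"
    using assms by simp
  ultimately show ?thesis
    using assms by (simp add: field_simps)
qed

lemma ln_binomial_Suc:
  assumes "k \<le> n"
  shows "ln (real (Suc n choose k)) = ln (real (n choose k)) + ln ((real n + 1) / (real n + 1 - real k))"
  unfolding binomial_Suc_real[OF assms] using assms by (intro ln_mult_pos) auto

lemma ln_binomial_Suc_Suc:
  assumes "k \<le> n"
  shows "ln (real (Suc n choose Suc k)) = ln (real (n choose k)) + ln ((real n + 1) / (real k + 1))"
  unfolding binomial_Suc_Suc_real using assms by (intro ln_mult_pos) auto

lemma binomial_3m_plus_2_ge:
  assumes "1 \<le> m"
  shows "3 * real (3*m choose m) \<le> real ((3*m+2) choose (m+1))"
proof -
  define M where "M = real m"
  have "real ((3*m+2) choose (m+1)) = real (Suc (3*m+1) choose Suc m)"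
    by simp
  also have "\<dots> = real (Suc (3*m) choose m) * ((3*M+2) / (M+1))"
    by (subst binomial_Suc_Suc_real) (simp add: M_def)
  also have "\<dots> = real (3*m choose m) * ((3*M+1) / (2*M+1) * ((3*M+2) / (M+1)))"
    by (subst binomial_Suc_real) (auto simp: M_def)
  finally have eq: "real ((3*m+2) choose (m+1)) = real (3*m choose m) * ((3*M+1) * (3*M+2) / ((2*M+1) * (M+1)))"
    by simp
  have M: "1 \<le> M"
    using assms by (simp add: M_def)
  then have "1 \<le> M * M"
    using mult_mono[of 1 M 1 M] by simp
  then have "3 * ((2*M+1) * (M+1)) \<le> (3*M+1) * (3*M+2)"
    by (simp add: algebra_simps)
  then have "3 \<le> (3*M+1) * (3*M+2) / ((2*M+1) * (M+1))"
    using M by (simp add: pos_le_divide_eq)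
  then show ?thesis
    unfolding eq by (metis mult.commute mult_right_mono of_nat_0_le_iff)
qed

lemma binomial_3m_plus_3_ge:
  assumes "1 \<le> m"
  shows "5 * real (3*m choose m) \<le> real ((3*m+3) choose (m+1))"
proof -
  define M where "M = real m"
  have "3*m+3 = Suc (3*m+2)" "3*m+2 = Suc (Suc (3*m))" "m+1 = Suc m"
    by simp_all
  then have "real ((3*m+3) choose (m+1)) = real (Suc (3*m+2) choose Suc m)"
    by (simp only:)
  also have "\<dots> = real (Suc (Suc (3*m)) choose m) * ((3*M+3) / (M+1))"
    by (subst binomial_Suc_Suc_real) (simp add: M_def \<open>3*m+2 = Suc (Suc (3*m))\<close>)
  also have "\<dots> = real (3*m choose m) * ((3*M+1) / (2*M+1) * ((3*M+2) / (2*M+2)) * ((3*M+3) / (M+1)))"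
    by (subst binomial_Suc_real, simp, subst binomial_Suc_real) (auto simp: M_def)
  finally have eq: "real ((3*m+3) choose (m+1))
      = real (3*m choose m) * ((3*M+1) * (3*M+2) * (3*M+3) / ((2*M+1) * (2*M+2) * (M+1)))"
    by simp
  have M: "1 \<le> M"
    using assms by (simp add: M_def)
  have "(3*M+1) * (3*M+2) * (3*M+3) - 5 * ((2*M+1) * (2*M+2) * (M+1)) = (M+1) * (7*M+4) * (M-1)"
    by (simp add: algebra_simps)
  moreover have "0 \<le> (M+1) * (7*M+4) * (M-1)"
    using M by simp
  ultimately have "5 * ((2*M+1) * (2*M+2) * (M+1)) \<le> (3*M+1) * (3*M+2) * (3*M+3)"
    by linarith
  then have "5 \<le> (3*M+1) * (3*M+2) * (3*M+3) / ((2*M+1) * (2*M+2) * (M+1))"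
    using M by (simp add: pos_le_divide_eq)
  then show ?thesis
    unfolding eq by (metis mult.commute mult_right_mono of_nat_0_le_iff)
qed

lemma ln_binomial_le_entropy:
  assumes "1 \<le> k" "k \<le> N"
  shows "ln (real (N choose k)) \<le> real k * ln (real N / real k) + real (N - k) * ln (real N / real (N - k))"
proof (cases "k = N")
  case False
  then have kN: "k < N" using assms by simp
  define p where "p = real k / real N"
  define q where "q = real (N - k) / real N"
  have pq: "p + q = 1" "0 < p" "0 < q"
    unfolding p_def q_def using assms kN by (auto simp: field_simps)
  have "real (N choose k) * p^k * q^(N-k) \<le> (\<Sum>j\<le>N. real (N choose j) * p^j * q^(N-j))"
    using assms pq by (intro member_le_sum) auto
  also have "\<dots> = 1"
    using pq by (simp flip: binomial_ring)
  finally have "ln (real (N choose k) * p^k * q^(N-k)) \<le> 0"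
    using pq assms by simp
  then have "ln (real (N choose k)) + real k * ln p + real (N-k) * ln q \<le> 0"
    using pq assms by (simp add: ln_mult ln_realpow)
  moreover have "ln p = - ln (real N / real k)" "ln q = - ln (real N / real (N-k))"
    unfolding p_def q_def using assms kN by (simp_all add: ln_div)
  ultimately show ?thesis by simp
qed simp

lemma ln_binomial_le_pade:
  assumes "1 \<le> m" "m \<le> n"
  shows "ln (real (n choose m))
    \<le> real m * ln (real n / real m) + real m * (6 * real n - 5 * real m) / (6 * real n - 2 * real m)"
proof -
  define N where "N = real n"
  define M where "M = real m"
  define K where "K = N - M"
  have M: "1 \<le> M" "M \<le> N" "real (n - m) = K"
    using assms by (auto simp: N_def M_def K_def)
  have "K * ln (N / K) \<le> M * (6 * N - 5 * M) / (6 * N - 2 * M)"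
  proof (cases "K = 0")
    case False
    then have "K * ln (N / K) = K * ln (1 + M / K)"
      using M by (simp add: K_def field_simps)
    also have "\<dots> \<le> M * (6 * K + M) / (6 * K + 4 * M)"
      using False M by (intro mult_ln_one_plus_div_le) (auto simp: K_def)
    finally show ?thesis
      by (simp add: K_def algebra_simps)
  qed (use M in simp)
  then show ?thesis
    using ln_binomial_le_entropy[OF assms] M by (simp add: N_def M_def)
qed

section \<open>A budget for the adaptive parameter\<close>

definition binom_budget :: "nat \<Rightarrow> nat \<Rightarrow> real" where
  "binom_budget t m = ln (real (min t (3*m) choose m)) + ln (real (min t (3*m)) / real m)"

definition loglog_budget :: "nat \<Rightarrow> nat \<Rightarrow> real" where
  "loglog_budget t m = 3/2 * real m * ln (ln (max (real t / real m) 3) + 1/4)"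

definition beta_budget :: "nat \<Rightarrow> nat \<Rightarrow> real" where
  "beta_budget t m = binom_budget t m + loglog_budget t m"

lemma binom_budget_sparse:
  assumes "1 \<le> m" "3 * m \<le> n"
  shows "binom_budget n m = ln (real (3*m choose m)) + ln 3"
  using assms by (simp add: binom_budget_def min_absorb2)

lemma beta_budget_one_one: "beta_budget 1 1 = 3/2 * ln (ln 3 + 1/4)"
  by (simp add: beta_budget_def binom_budget_def loglog_budget_def)

lemma ln_one_plus_ratio_le:
  fixes M N :: real
  assumes "1 \<le> M" "M \<le> N"
  shows "ln (1 + M / ln ((N + 1) / M) / N) \<le> ln ((N + 1)^2 / (N * (N + 1 - M)))"
proof -
  define L where "L = ln ((N + 1) / M)"
  have L: "0 < L"
    using assms by (simp add: L_def)
  have D: "0 < N * (N + 1 - M)"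
    using assms by simp
  have "(N + 1 - M) / (N + 1) \<le> L"
    using one_minus_inverse_le_ln[of "(N+1)/M"] assms by (simp add: L_def field_simps)
  then have "N * ((N + 1 - M) / (N + 1)) \<le> N * L"
    using assms by (intro mult_left_mono) auto
  then have "M / (N * L) \<le> M / (N * ((N + 1 - M) / (N + 1)))"
    using assms L by (intro divide_left_mono mult_pos_pos) auto
  also have "\<dots> = M * (N + 1) / (N * (N + 1 - M))"
    using assms by (simp add: field_simps)
  also have "\<dots> \<le> ((N + 1)^2 - N * (N + 1 - M)) / (N * (N + 1 - M))"
  proof (rule divide_right_mono)
    show "M * (N + 1) \<le> (N + 1)^2 - N * (N + 1 - M)"
      using assms by (simp add: power2_eq_square algebra_simps)
  qed (use D in simp)
  also have "\<dots> = (N + 1)^2 / (N * (N + 1 - M)) - 1"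
    using assms D by (simp add: diff_divide_distrib)
  finally have "1 + M / L / N \<le> (N + 1)^2 / (N * (N + 1 - M))"
    by (simp add: mult.commute)
  then show ?thesis
    unfolding L_def[symmetric] using assms L by (intro ln_mono) (auto intro!: add_pos_nonneg)
qed

lemma beta_budget_step_repeat_dense:
  assumes "1 \<le> m" "m \<le> n" "n + 1 \<le> 3 * m"
  shows "ln (1 + real m / ln (real (n+1) / real m) / real n)
    \<le> beta_budget (n+1) m - beta_budget n m"
proof -
  define N where "N = real n"
  define M where "M = real m"
  have M: "1 \<le> M" "M \<le> N" "N + 1 \<le> 3 * M"
    using assms by (auto simp: N_def M_def)
  have "max (real (n+1) / real m) 3 = 3" "max (real n / real m) 3 = 3"
    using M by (auto simp: N_def M_def field_simps)
  then have loglog: "loglog_budget (n+1) m = loglog_budget n m"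
    unfolding loglog_budget_def by simp
  have "ln (real (Suc n choose m)) = ln (real (n choose m)) + ln ((N + 1) / (N + 1 - M))"
    using ln_binomial_Suc[OF assms(2)] by (simp add: N_def M_def)
  then have "binom_budget (n+1) m - binom_budget n m
      = ln ((N + 1) / (N + 1 - M)) + (ln ((N + 1) / M) - ln (N / M))"
    using assms by (simp add: binom_budget_def min_absorb1 N_def M_def add.commute)
  also have "\<dots> = ln ((N + 1)^2 / (N * (N + 1 - M)))"
    using M by (simp add: ln_div ln_mult power2_eq_square)
  finally show ?thesis
    using ln_one_plus_ratio_le[OF M(1,2)] loglog
    by (simp add: beta_budget_def N_def M_def add.commute)
qed

lemma inverse_le_loglog_increment:
  fixes N L L0 :: real
  assumes "3 \<le> N" "1 \<le> L0" "L0 \<le> L" "L - L0 = ln (1 + 1 / N)"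
  shows "1 / (N * L) \<le> 3/2 * (ln (L + 1/4) - ln (L0 + 1/4))"
proof -
  have "(2 * N + 1) * (L + 1/4) \<le> 3 * N * L"
  proof -
    have "N - 1 \<le> (N - 1) * L"
      using mult_left_mono[of 1 L "N - 1"] assms by simp
    then show ?thesis
      using assms by (simp add: algebra_simps)
  qed
  then have "3 / (3 * N * L) \<le> 3 / ((2 * N + 1) * (L + 1/4))"
    using assms by (intro frac_le) auto
  also have "\<dots> = 3/2 * (2 / (2 * N + 1) / (L + 1/4))"
    by simp
  also have "2 / (2 * N + 1) / (L + 1/4) \<le> ln (1 + 1 / N) / (L + 1/4)"
    using ln_one_plus_inverse_ge[of N] assms by (intro divide_right_mono) auto
  also have "ln (1 + 1 / N) / (L + 1/4) \<le> ln (L + 1/4) - ln (L0 + 1/4)"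
    using ln_diff_ge_div[of "L0 + 1/4" "L + 1/4"] assms by simp
  finally show ?thesis
    by simp
qed

lemma beta_budget_step_repeat_sparse:
  assumes "1 \<le> m" "3 * m \<le> n"
  shows "ln (1 + real m / ln (real (n+1) / real m) / real n)
    \<le> beta_budget (n+1) m - beta_budget n m"
proof -
  define N where "N = real n"
  define M where "M = real m"
  define L where "L = ln ((N+1) / M)"
  define L0 where "L0 = ln (N / M)"
  have M: "1 \<le> M" "3 * M \<le> N"
    using assms by (auto simp: N_def M_def)
  have x: "3 \<le> N / M" "N / M \<le> (N + 1) / M"
    using M by (simp_all add: field_simps)
  then have "max ((N + 1) / M) 3 = (N + 1) / M" "max (N / M) 3 = N / M"
    by auto
  then have loglog: "loglog_budget (n+1) m - loglog_budget n m = 3/2 * M * (ln (L + 1/4) - ln (L0 + 1/4))"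
    unfolding loglog_budget_def L_def L0_def N_def M_def by (simp add: algebra_simps)
  have binom: "binom_budget (n+1) m = binom_budget n m"
    using assms by (simp add: binom_budget_def min_absorb2)
  have "ln 3 \<le> L0" "L0 \<le> L"
    using x by (auto simp: L0_def L_def intro!: ln_mono)
  then have L: "1 \<le> L0" "L0 \<le> L"
    using ln_three_bounds(1) by linarith+
  moreover have "L - L0 = ln (1 + 1 / N)"
    using M by (simp add: L_def L0_def ln_div field_simps)
  ultimately have increment: "1 / (N * L) \<le> 3/2 * (ln (L + 1/4) - ln (L0 + 1/4))"
    using M by (intro inverse_le_loglog_increment) auto
  have "ln (1 + M / L / N) \<le> M / (N * L)"
    using ln_add_one_self_le_self[of "M / L / N"] M L by (simp add: mult.commute)
  also have "\<dots> = M * (1 / (N * L))"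
    by simp
  also have "\<dots> \<le> M * (3/2 * (ln (L + 1/4) - ln (L0 + 1/4)))"
    using increment M by (intro mult_left_mono) auto
  also have "\<dots> = 3/2 * M * (ln (L + 1/4) - ln (L0 + 1/4))"
    by (simp only: mult.left_commute mult.assoc)
  finally have "ln (1 + M / L / N) \<le> 3/2 * M * (ln (L + 1/4) - ln (L0 + 1/4))" .
  then show ?thesis
    using binom loglog by (simp add: beta_budget_def L_def N_def M_def add.commute)
qed

lemma beta_budget_step_repeat:
  assumes "1 \<le> m" "m \<le> n"
  shows "ln (1 + real m / ln (real (n+1) / real m) / real n)
    \<le> beta_budget (n+1) m - beta_budget n m"
  using beta_budget_step_repeat_dense[OF assms] beta_budget_step_repeat_sparse[OF assms(1), of n]
  by (cases "n + 1 \<le> 3 * m") auto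

lemma ln_add_inverse_le_dense:
  fixes x L :: real
  assumes x: "1 \<le> x" "x \<le> 3" and L: "0 < L" "L \<le> ln (x + 1)"
  shows "ln (L + 1 / x) \<le> 9/16 + 2 * ln ((x + 1) / 2) - ln x"
proof -
  have "L \<le> ln 2 + ln ((x + 1) / 2)"
    using L(2) x by (simp add: ln_div)
  also have "\<dots> \<le> 25/36 + ((x + 1) / 2 - 1)"
    using ln2_le_25_over_36 ln_le_minus_one[of "(x + 1) / 2"] x by (intro add_mono) auto
  finally have "L \<le> 25/36 + (x - 1) / 2"
    by simp
  moreover have "25/36 + (x - 1) / 2 + 1 / x \<le> 7/4 * (((x + 1) / 2)^2 / x)"
  proof -
    have "x^2 - 4*x + 3 \<le> 0"
      using mult_nonneg_nonpos[of "x - 1" "x - 3"] x by (simp add: algebra_simps power2_eq_square)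
    have "16*x * (25/36 + (x - 1) / 2 + 1 / x) = 100/9 * x + 8 * x^2 - 8 * x + 16"
      using x by (simp add: field_simps power2_eq_square)
    also have "\<dots> \<le> 7 * (x + 1)^2"
      using \<open>x^2 - 4*x + 3 \<le> 0\<close> x by (simp add: power2_eq_square algebra_simps)
    also have "\<dots> = 16*x * (7/4 * (((x + 1) / 2)^2 / x))"
      using x by (simp add: field_simps power2_eq_square)
    finally show ?thesis
      using x by (subst (asm) mult_le_cancel_left_pos) auto
  qed
  ultimately have "ln (L + 1 / x) \<le> ln (7/4 * (((x + 1) / 2)^2 / x))"
    using x L by (intro ln_mono) (auto intro!: add_pos_nonneg)
  also have "\<dots> = ln (7/4) + 2 * ln ((x + 1) / 2) - ln x"
    using x by (simp add: ln_mult ln_div ln_realpow)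
  finally show ?thesis
    using ln_seven_quarter_le by linarith
qed

lemma beta_budget_step_new_dense:
  assumes "1 \<le> m" "m \<le> n" "n \<le> 3 * m"
  shows "ln (ln (real (n+1) / real m) + real m / real n)
    \<le> beta_budget (n+1) (m+1) - beta_budget n m + 1/4"
proof -
  define N where "N = real n"
  define M where "M = real m"
  define x where "x = N / M"
  define L where "L = ln ((N+1) / M)"
  have M: "1 \<le> M" "M \<le> N" "N \<le> 3 * M"
    using assms by (auto simp: N_def M_def)
  have x: "1 \<le> x" "x \<le> 3"
    using M by (simp_all add: x_def field_simps)
  have "(N+1) / (M+1) \<le> x"
    using M by (simp add: x_def field_simps)
  then have "max ((N+1) / (M+1)) 3 = 3" "max (N / M) 3 = 3"
    using x by (auto simp: x_def)
  then have loglog: "loglog_budget (n+1) (m+1) - loglog_budget n m = 3/2 * ln (ln 3 + 1/4)"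
    unfolding loglog_budget_def N_def M_def by (simp add: algebra_simps)
  have "ln (real (Suc n choose Suc m)) = ln (real (n choose m)) + ln ((N+1) / (M+1))"
    using ln_binomial_Suc_Suc[OF assms(2)] by (simp add: N_def M_def)
  then have binom: "binom_budget (n+1) (m+1) - binom_budget n m = 2 * ln ((N+1) / (M+1)) - ln x"
    using assms by (simp add: binom_budget_def min_absorb1 x_def N_def M_def add.commute)
  have "0 \<le> (M - 1) * (N - M)"
    using M by simp
  then have "(x + 1) / 2 \<le> (N+1) / (M+1)"
    using M by (simp add: x_def field_simps)
  then have "2 * ln ((x + 1) / 2) \<le> 2 * ln ((N+1) / (M+1))"
    using x by (intro mult_left_mono ln_mono) auto
  moreover have "ln (L + M / N) \<le> 9/16 + 2 * ln ((x + 1) / 2) - ln x"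
  proof -
    have "0 < L" "L \<le> ln (x + 1)"
      using M by (auto simp: L_def x_def field_simps intro!: ln_mono)
    moreover have "M / N = 1 / x"
      by (simp add: x_def)
    ultimately show ?thesis
      using ln_add_inverse_le_dense[OF x] by simp
  qed
  ultimately show ?thesis
    using binom loglog ln_ln_three_bounds(1)
    by (simp add: beta_budget_def L_def N_def M_def add.commute)
qed

lemma binom_budget_step_new_boundary:
  assumes "1 \<le> m"
  shows "6/7 \<le> binom_budget (3*m+2) (m+1) - binom_budget (3*m+1) m"
proof -
  define M where "M = real m"
  have "ln (real (3*m choose m)) + ln 3 = ln (3 * real (3*m choose m))"
    by (simp add: ln_mult)
  also have "\<dots> \<le> ln (real ((3*m+2) choose (m+1)))"
    using binomial_3m_plus_2_ge[OF assms] by (intro ln_mono) auto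
  finally have "ln (real (3*m choose m)) + ln 3 \<le> ln (real ((3*m+2) choose (m+1)))" .
  moreover have "ln (5/2) \<le> ln ((3*M+2) / (M+1))"
    using assms by (intro ln_mono) (auto simp: M_def field_simps)
  moreover have "binom_budget (3*m+2) (m+1) = ln (real ((3*m+2) choose (m+1))) + ln ((3*M+2) / (M+1))"
    by (simp add: binom_budget_def M_def add.commute del: binomial_Suc_Suc)
  ultimately show ?thesis
    using binom_budget_sparse[of m "3*m+1"] ln_five_half_bounds(1) assms by simp
qed

lemma loglog_budget_step_new_boundary:
  assumes "1 \<le> m"
  shows "-1/15 \<le> loglog_budget (3*m+2) (m+1) - loglog_budget (3*m+1) m"
proof -
  define M where "M = real m"
  define l0 where "l0 = ln 3 + (1/4::real)"
  define l where "l = ln ((3*M+1) / M) + (1/4::real)"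
  have M: "1 \<le> M"
    using assms by (simp add: M_def)
  have "(3*M+2) / (M+1) \<le> 3" "3 \<le> (3*M+1) / M"
    using M by (simp_all add: field_simps)
  then have "max ((3*M+2) / (M+1)) 3 = 3" "max ((3*M+1) / M) 3 = (3*M+1) / M"
    by auto
  then have loglog: "loglog_budget (3*m+2) (m+1) - loglog_budget (3*m+1) m = 3/2 * ((M+1) * ln l0 - M * ln l)"
    unfolding loglog_budget_def l0_def l_def M_def by (simp add: algebra_simps)
  have l0: "5/4 \<le> l0" "l0 \<le> l"
    using ln_three_bounds(1) \<open>3 \<le> (3*M+1) / M\<close> by (auto simp: l0_def l_def)
  have "ln l - ln l0 \<le> (ln ((3*M+1) / M) - ln 3) / l0"
    using ln_diff_le_div[of l0 l] l0 by (simp add: l0_def l_def)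
  also have "\<dots> \<le> (((3*M+1) / M - 3) / 3) / l0"
    using ln_diff_le_div[of 3 "(3*M+1) / M"] M l0 by (intro divide_right_mono) auto
  also have "\<dots> = 1 / (3 * M * l0)"
    using M by (simp add: field_simps)
  finally have "M * (ln l - ln l0) \<le> M * (1 / (3 * M * l0))"
    using M by (intro mult_left_mono) auto
  also have "\<dots> = 1 / (3 * l0)"
    using M by simp
  also have "\<dots> \<le> 4/15"
    using l0 by (simp add: field_simps)
  finally show ?thesis
    using loglog ln_ln_three_bounds(1) by (simp add: l0_def algebra_simps)
qed

lemma beta_budget_step_new_boundary:
  assumes "1 \<le> m" "n = 3 * m + 1"
  shows "ln (ln (real (n+1) / real m) + real m / real n)
    \<le> beta_budget (n+1) (m+1) - beta_budget n m + 1/4"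
proof -
  define N where "N = real n"
  define M where "M = real m"
  define L where "L = ln ((N+1) / M)"
  have M: "1 \<le> M" "N = 3 * M + 1"
    using assms by (auto simp: N_def M_def)
  have "0 < L" "L \<le> ln 5"
    using M by (auto simp: L_def field_simps intro!: ln_mono)
  moreover have "0 \<le> M / N" "M / N \<le> 1/3"
    using M by (simp_all add: field_simps)
  moreover have "ln (L + M / N) \<le> L + M / N - 1"
    using calculation by (intro ln_le_minus_one) simp
  ultimately have "ln (L + M / N) \<le> ln 5 + 1/3 - 1"
    by linarith
  moreover have "n + 1 = 3*m+2"
    using assms by simp
  ultimately show ?thesis
    using binom_budget_step_new_boundary[OF assms(1)] loglog_budget_step_new_boundary[OF assms(1)]
      ln_five_bounds(2) assms
    by (simp add: beta_budget_def L_def N_def M_def add.commute)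
qed

lemma binom_budget_step_new_sparse:
  assumes "1 \<le> m" "3 * m + 2 \<le> n"
  shows "14/9 \<le> binom_budget (n+1) (m+1) - binom_budget n m"
proof -
  have "ln (real (3*m choose m)) + ln 5 = ln (5 * real (3*m choose m))"
    by (simp add: ln_mult)
  also have "\<dots> \<le> ln (real ((3*m+3) choose (m+1)))"
    using binomial_3m_plus_3_ge[OF assms(1)] by (intro ln_mono) auto
  finally have "ln (real (3*m choose m)) + ln 5 \<le> ln (real ((3*m+3) choose (m+1)))" .
  moreover have "binom_budget (n+1) (m+1) = ln (real ((3*m+3) choose (m+1))) + ln 3"
    using binom_budget_sparse[of "m+1" "n+1"] assms by (simp add: algebra_simps del: binomial_Suc_Suc)
  ultimately show ?thesis
    using binom_budget_sparse[of m n] ln_five_bounds(1) assms by simp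
qed

lemma loglog_budget_step_new_sparse:
  assumes "1 \<le> m" "3 * m + 2 \<le> n"
  defines "l' \<equiv> ln (real (n+1) / real (m+1)) + 1/4"
  shows "3/2 * ln l' - 3/2 * (1 / l') \<le> loglog_budget (n+1) (m+1) - loglog_budget n m"
proof -
  define N where "N = real n"
  define M where "M = real m"
  define x where "x = N / M"
  define x' where "x' = (N+1) / (M+1)"
  define l where "l = ln x + (1/4::real)"
  have M: "1 \<le> M" "3 * M + 2 \<le> N"
    using assms by (auto simp: N_def M_def)
  have x': "3 \<le> x'" "x' \<le> x" and l'_eq: "l' = ln x' + 1/4"
    using M by (simp_all add: x_def x'_def l'_def N_def M_def field_simps)
  then have "max x' 3 = x'" "max x 3 = x"
    by auto
  then have loglog: "loglog_budget (n+1) (m+1) - loglog_budget n m = 3/2 * ((M+1) * ln l' - M * ln l)"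
    unfolding loglog_budget_def l_def l'_eq x_def x'_def N_def M_def by (simp add: algebra_simps)
  have "ln 3 \<le> ln x'"
    using x' by simp
  then have "1 \<le> l'"
    unfolding l'_eq using ln_three_bounds(1) by linarith
  moreover have "l' \<le> l"
    using x' by (simp add: l_def l'_eq)
  ultimately have l': "1 \<le> l'" "l' \<le> l"
    by simp_all
  have "ln l - ln l' \<le> (ln x - ln x') / l'"
    using ln_diff_le_div[of l' l] l' by (simp add: l_def l'_eq)
  also have "\<dots> \<le> ((x - x') / x') / l'"
    using ln_diff_le_div[of x' x] x' l' by (intro divide_right_mono) auto
  finally have "M * (ln l - ln l') \<le> M * (((x - x') / x') / l')"
    using M by (intro mult_left_mono) auto
  also have "\<dots> = ((x' - 1) / x') / l'"
  proof -
    have "M * x' = (N + 1) - x'"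
      using M by (simp add: x'_def field_simps)
    then have "M * (x - x') = x' - 1"
      using M by (simp add: x_def right_diff_distrib)
    then show ?thesis
      by (metis times_divide_eq_right)
  qed
  also have "\<dots> \<le> 1 / l'"
    using x' l' by (intro divide_right_mono) auto
  finally show ?thesis
    using loglog by (simp add: algebra_simps)
qed

lemma beta_budget_step_new_sparse:
  assumes "1 \<le> m" "3 * m + 2 \<le> n"
  shows "ln (ln (real (n+1) / real m) + real m / real n)
    \<le> beta_budget (n+1) (m+1) - beta_budget n m + 1/4"
proof -
  define N where "N = real n"
  define M where "M = real m"
  define L where "L = ln ((N+1) / M)"
  define l' where "l' = ln ((N+1) / (M+1)) + 1/4"
  have M: "1 \<le> M" "3 * M + 2 \<le> N"
    using assms by (auto simp: N_def M_def)
  have "ln 3 \<le> ln ((N+1) / (M+1))"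
    using M by (intro ln_mono) (auto simp: field_simps)
  then have l': "79/60 \<le> l'"
    unfolding l'_def using ln_three_bounds(1) by linarith
  have "0 \<le> (M - 1) * (N + 1)"
    using M by simp
  then have "(N+1) / M \<le> 2 * ((N+1) / (M+1))"
    using M by (simp add: field_simps)
  then have "L \<le> ln (2 * ((N+1) / (M+1)))"
    using M by (auto simp: L_def intro!: ln_mono)
  also have "\<dots> = ln 2 + ln ((N+1) / (M+1))"
    by (rule ln_mult_pos) (use M in auto)
  moreover have "M / N \<le> 1/3"
    using M by (simp add: field_simps)
  ultimately have "L + M / N \<le> l' + 7/9"
    using ln2_le_25_over_36 unfolding l'_def by linarith
  moreover have "0 < L"
    using M by (simp add: L_def)
  ultimately have "ln (L + M / N) \<le> ln (l' + 7/9)"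
    using M by (intro ln_mono) (auto intro!: add_pos_nonneg)
  also have "\<dots> \<le> ln l' + (7/9) / l'"
    using ln_diff_le_div[of l' "l' + 7/9"] l' by simp
  finally have "ln (L + M / N) \<le> ln l' + (7/9) / l'" .
  moreover have "(7/9) / l' + 3/2 * (1 / l') \<le> 14/9 + 1/4"
    using l' by (simp add: field_simps)
  moreover have "0 \<le> ln l'"
    using l' by simp
  ultimately show ?thesis
    using binom_budget_step_new_sparse[OF assms] loglog_budget_step_new_sparse[OF assms]
    by (simp add: beta_budget_def L_def l'_def N_def M_def add.commute)
qed

lemma beta_budget_step_new:
  assumes "1 \<le> m" "m \<le> n"
  shows "ln (ln (real (n+1) / real m) + real m / real n)
    \<le> beta_budget (n+1) (m+1) - beta_budget n m + 1/4"
proof -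
  consider "n \<le> 3 * m" | "n = 3 * m + 1" | "3 * m + 2 \<le> n"
    by linarith
  then show ?thesis
    using beta_budget_step_new_dense beta_budget_step_new_boundary beta_budget_step_new_sparse assms
    by cases blast+
qed

lemma pade_sum_le_on_interval:
  fixes x a b B C :: real
  assumes "1 \<le> a" "a \<le> x" "x \<le> b" "ln b \<le> B" "0 < C" "C \<le> ln (2 * a)"
  shows "ln x + (6*x - 5) / (6*x - 2) + 3/2 / ln (2*x) \<le> B + (6*b - 5) / (6*b - 2) + 3/2 / C"
proof -
  have "ln x \<le> ln b"
    using assms by (intro ln_mono) auto
  moreover have "(6*x - 5) / (6*x - 2) \<le> (6*b - 5) / (6*b - 2)"
  proof -
    have "3 / (6*b - 2) \<le> 3 / (6*x - 2)"
      using assms by (intro divide_left_mono) (auto intro!: mult_pos_pos)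
    moreover have "(6*x - 5) / (6*x - 2) = 1 - 3 / (6*x - 2)" "(6*b - 5) / (6*b - 2) = 1 - 3 / (6*b - 2)"
      using assms by (simp_all add: field_simps)
    ultimately show ?thesis
      by simp
  qed
  moreover have "ln (2*a) \<le> ln (2*x)"
    using assms by (intro ln_mono) auto
  then have "C \<le> ln (2*x)"
    using assms by linarith
  then have "3/2 / ln (2*x) \<le> 3/2 / C"
    using assms by (intro divide_left_mono) auto
  ultimately show ?thesis
    using assms(4) by linarith
qed

lemma pade_sum_le_three:
  fixes x :: real
  assumes "1 \<le> x" "x \<le> 3"
  shows "ln x + (6*x - 5) / (6*x - 2) + 3/2 / ln (2*x) \<le> 3"
proof -
  let ?f = "\<lambda>x::real. ln x + (6*x - 5) / (6*x - 2) + 3/2 / ln (2*x)"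
  have "4/3 \<le> ln (4::real)"
    using ln_four_eq ln2_ge_two_thirds by simp
  consider "x \<le> 5/4" | "5/4 \<le> x" "x \<le> 3/2" | "3/2 \<le> x" "x \<le> 2" | "2 \<le> x" "x \<le> 5/2" | "5/2 \<le> x"
    by linarith
  then show ?thesis
  proof cases
    case 1
    have "?f x \<le> 25/112 + (6*(5/4) - 5) / (6*(5/4) - 2) + 3/2 / (2/3)"
      by (rule pade_sum_le_on_interval[of 1]) (use assms 1 ln_five_quarter_bounds ln2_ge_two_thirds in auto)
    then show ?thesis by (rule order_trans) simp
  next
    case 2
    have "?f x \<le> 13/32 + (6*(3/2) - 5) / (6*(3/2) - 2) + 3/2 / (6/7)"
      by (rule pade_sum_le_on_interval[of "5/4"]) (use 2 ln_three_half_bounds ln_five_half_bounds in auto)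
    then show ?thesis by (rule order_trans) simp
  next
    case 3
    have "?f x \<le> 25/36 + (6*2 - 5) / (6*2 - 2) + 3/2 / (16/15)"
      by (rule pade_sum_le_on_interval[of "3/2"]) (use 3 ln2_le_25_over_36 ln_three_bounds in auto)
    then show ?thesis by (rule order_trans) simp
  next
    case 4
    have "?f x \<le> (25/36 + 25/112) + (6*(5/2) - 5) / (6*(5/2) - 2) + 3/2 / (4/3)"
      by (rule pade_sum_le_on_interval[of 2]) (use 4 ln_five_half_bounds \<open>4/3 \<le> ln 4\<close> in auto)
    then show ?thesis by (rule order_trans) simp
  next
    case 5
    have "?f x \<le> (25/36 + 13/32) + (6*3 - 5) / (6*3 - 2) + 3/2 / (14/9)"
      by (rule pade_sum_le_on_interval[of "5/2"]) (use assms 5 ln_three_bounds ln_five_bounds in auto)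
    then show ?thesis by (rule order_trans) simp
  qed
qed

lemma beta_budget_final_dense:
  assumes "1 \<le> m" "m \<le> n" "n \<le> 3 * m"
  shows "beta_budget n m - beta_budget 1 1 + 3/8 * real m - 1/4
    \<le> 3/2 * real m * ln (ln (2 * real n / real m)) + 2.33 * real m + 0.86"
proof -
  define N where "N = real n"
  define M where "M = real m"
  define x where "x = N / M"
  define w where "w = (6*x - 5) / (6*x - 2)"
  define l0 where "l0 = ln (ln 3 + 1/4 :: real)"
  define LL where "LL = ln (ln (2 * x))"
  have M: "1 \<le> M" "M \<le> N" "N \<le> 3 * M"
    using assms by (auto simp: N_def M_def)
  have x: "1 \<le> x" "x \<le> 3"
    using M by (simp_all add: x_def field_simps)
  have "max x 3 = 3"
    using x by simp
  then have budget: "beta_budget n m = ln (real (n choose m)) + ln x + 3/2 * (M * l0)"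
    using assms by (simp add: beta_budget_def binom_budget_def loglog_budget_def min_absorb1
        x_def N_def M_def l0_def)
  have "M * (6 * N - 5 * M) / (6 * N - 2 * M) = M * w"
    using M by (simp add: w_def x_def field_simps)
  then have binom: "ln (real (n choose m)) \<le> M * ln x + M * w"
    using ln_binomial_le_pade[OF assms(1,2)] unfolding x_def N_def M_def by linarith
  have "3/2 - 3/2 / ln (2 * x) \<le> 3/2 * LL"
    using one_minus_inverse_le_ln[of "ln (2 * x)"] x by (simp add: LL_def)
  then have "ln x + w + 3/2 * l0 + 3/8 - 3/2 * LL \<le> 233/100"
    using pade_sum_le_three[OF x] ln_ln_three_bounds(2) unfolding w_def l0_def by linarith
  then have "M * (ln x + w + 3/2 * l0 + 3/8 - 3/2 * LL) \<le> M * (233/100)"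
    using M by (intro mult_left_mono) auto
  then have per_symbol: "M * ln x + M * w + 3/2 * (M * l0) + 3/8 * M - 3/2 * (M * LL) \<le> 233/100 * M"
    by (simp add: algebra_simps)
  have "ln x \<le> ln 3"
    using x by simp
  then have "beta_budget n m - beta_budget 1 1 + 3/8 * M - 1/4 \<le> 3/2 * (M * LL) + 233/100 * M + 86/100"
    using budget binom per_symbol beta_budget_one_one ln_three_bounds(2) ln_ln_three_bounds(1)
    unfolding l0_def by linarith
  then show ?thesis
    by (simp add: LL_def x_def N_def M_def)
qed

lemma beta_budget_final_sparse:
  assumes "1 \<le> m" "3 * m \<le> n"
  shows "beta_budget n m - beta_budget 1 1 + 3/8 * real m - 1/4
    \<le> 3/2 * real m * ln (ln (2 * real n / real m)) + 2.33 * real m + 0.86"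
proof -
  define N where "N = real n"
  define M where "M = real m"
  define x where "x = N / M"
  define LL where "LL = ln (ln (2 * x))"
  have M: "1 \<le> M" "3 \<le> x"
    using assms by (auto simp: N_def M_def x_def field_simps)
  then have "max x 3 = x"
    by simp
  then have budget: "beta_budget n m = ln (real (3*m choose m)) + ln 3 + 3/2 * (M * ln (ln x + 1/4))"
    using binom_budget_sparse[OF assms] by (simp add: beta_budget_def loglog_budget_def x_def N_def M_def)
  have "ln (real (3*m choose m)) \<le> M * ln 3 + 2 * M * ln (3/2)"
    using ln_binomial_le_entropy[of m "3*m"] assms by (simp add: M_def)
  also have "\<dots> \<le> M * (25/36 + 13/32) + 2 * M * (13/32)"
    using ln_three_bounds(2) ln_three_half_bounds(2) M by (intro add_mono mult_left_mono) auto
  finally have binom: "ln (real (3*m choose m)) \<le> 551/288 * M"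
    by (simp add: algebra_simps)
  have "ln (2 * x) = ln 2 + ln x"
    using M by (simp add: ln_mult)
  moreover have "0 \<le> ln x"
    using M by simp
  ultimately have "ln (ln x + 1/4) \<le> LL"
    unfolding LL_def using ln2_ge_two_thirds by (intro ln_mono) auto
  then have "M * ln (ln x + 1/4) \<le> M * LL"
    using M by (intro mult_left_mono) auto
  then have "beta_budget n m - beta_budget 1 1 + 3/8 * M - 1/4 \<le> 3/2 * (M * LL) + 233/100 * M + 86/100"
    using budget binom beta_budget_one_one ln_three_bounds(2) ln_ln_three_bounds(1) M by linarith
  then show ?thesis
    by (simp add: LL_def x_def N_def M_def)
qed

lemma beta_budget_final:
  assumes "1 \<le> m" "m \<le> n"
  shows "beta_budget n m - beta_budget 1 1 + 3/8 * real m - 1/4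
    \<le> 3/2 * real m * ln (ln (2 * real n / real m)) + 2.33 * real m + 0.86"
  using beta_budget_final_dense[OF assms] beta_budget_final_sparse[OF assms(1)]
  by (cases "n \<le> 3 * m") auto

section \<open>Prefixes of a sequence\<close>

lemma alph_append: "t \<le> length ys \<Longrightarrow> alph (ys @ zs) t = alph ys t"
  by (simp add: alph_def)

lemma msz_append: "t \<le> length ys \<Longrightarrow> msz (ys @ zs) t = msz ys t"
  by (simp add: msz_def alph_append)

lemma cnt_append: "t \<le> length ys \<Longrightarrow> cnt (ys @ zs) t i = cnt ys t i"
  by (simp add: cnt_def)

lemma wt_append: "t \<le> length ys \<Longrightarrow> wt u v (ys @ zs) t i = wt u v ys t i"
  by (simp add: wt_def msz_append)

lemma beta_star_append: "t \<le> length ys \<Longrightarrow> beta_star b0 (ys @ zs) t = beta_star b0 ys t"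
  by (simp add: beta_star_def msz_append)

lemma S_cond_append: "t \<le> length ys \<Longrightarrow> S_cond b0 u v (ys @ zs) t i = S_cond b0 u v ys t i"
  by (simp add: S_cond_def cnt_append beta_star_append wt_append)

lemma alph_length: "alph ys (length ys) = set ys"
  by (simp add: alph_def)

lemma msz_length: "msz ys (length ys) = card (set ys)"
  by (simp add: msz_def alph_length)

lemma cnt_length_pos_iff: "0 < cnt ys (length ys) i \<longleftrightarrow> i \<in> set ys"
  by (auto simp: cnt_def filter_empty_conv)

lemma cnt_length_snoc:
  "cnt (ys @ [x]) (Suc (length ys)) i = cnt ys (length ys) i + (if i = x then 1 else 0)"
  by (simp add: cnt_def)

lemma msz_bounds:
  assumes "1 \<le> t" "t \<le> length ys"
  shows "1 \<le> msz ys t" "msz ys t \<le> t"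
proof -
  have "take t ys \<noteq> []"
    using assms by auto
  then show "1 \<le> msz ys t"
    by (simp add: msz_def alph_def Suc_leI card_gt_0_iff)
  show "msz ys t \<le> t"
    using card_length[of "take t ys"] assms by (simp add: msz_def alph_def)
qed

lemma beta_star_pos:
  assumes "0 < b0" "t \<le> length ys"
  shows "0 < beta_star b0 ys t"
proof (cases "t = 0")
  case False
  then have "1 \<le> msz ys t" "msz ys t \<le> t"
    using msz_bounds[of t ys] assms by auto
  then have "0 < ln (real (t + 1) / real (msz ys t))"
    by (simp add: field_simps)
  then show ?thesis
    using False \<open>1 \<le> msz ys t\<close> by (simp add: beta_star_def)
qed (use assms in \<open>simp add: beta_star_def\<close>)

lemma beta_star_length:
  assumes "ys \<noteq> []"
  shows "beta_star b0 ys (length ys)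
    = real (card (set ys)) / ln (real (length ys + 1) / real (card (set ys)))"
  using assms by (simp add: beta_star_def msz_length)

lemma S_cond_pos:
  assumes "0 < b0" "\<And>i. 0 < u i" "\<And>k. 0 < v k" "t \<le> length ys"
  shows "0 < S_cond b0 u v ys t i"
  using beta_star_pos[OF assms(1,4)] assms(2,3)
  by (auto simp: S_cond_def wt_def intro!: divide_pos_pos add_nonneg_pos)

lemma S_seq_snoc: "S_seq b0 u v (ys @ [x]) = S_seq b0 u v ys * S_cond b0 u v ys (length ys) x"
proof -
  have "S_seq b0 u v (ys @ [x])
      = (\<Prod>t<length ys. S_cond b0 u v (ys @ [x]) t ((ys @ [x]) ! t)) * S_cond b0 u v (ys @ [x]) (length ys) x"
    by (simp add: S_seq_def nth_append)
  also have "(\<Prod>t<length ys. S_cond b0 u v (ys @ [x]) t ((ys @ [x]) ! t)) = S_seq b0 u v ys"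
    unfolding S_seq_def by (intro prod.cong) (auto simp: S_cond_append nth_append)
  finally show ?thesis
    by (simp add: S_cond_append)
qed

lemma S_seq_pos:
  assumes "0 < b0" "\<And>i. 0 < u i" "\<And>k. 0 < v k"
  shows "0 < S_seq b0 u v ys"
  unfolding S_seq_def by (rule prod_pos, rule S_cond_pos) (use assms in auto)

lemma CL_snoc:
  "CL u v (ys @ [x]) = CL u v ys + (if x \<in> set ys then 0 else ln (1 / wt u v ys (length ys) x))"
proof -
  let ?new = "\<lambda>zs. {t. t < length zs \<and> zs ! t \<notin> alph zs t}"
  have new: "?new (ys @ [x]) = (if x \<in> set ys then ?new ys else insert (length ys) (?new ys))"
    by (auto simp: nth_append alph_append alph_length less_Suc_eq)
  have "(\<Sum>t\<in>?new ys. ln (1 / wt u v (ys @ [x]) t ((ys @ [x]) ! t))) = CL u v ys"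
    unfolding CL_def by (intro sum.cong) (auto simp: wt_append nth_append)
  then show ?thesis
    unfolding CL_def[of u v "ys @ [x]"] new by (simp add: wt_append)
qed

lemma sum_counts_snoc:
  fixes g :: "nat \<Rightarrow> real"
  assumes "g 0 = 0"
  shows "(\<Sum>j\<in>set (ys @ [x]). g (cnt (ys @ [x]) (length (ys @ [x])) j))
    = (\<Sum>j\<in>set ys. g (cnt ys (length ys) j)) + (g (cnt ys (length ys) x + 1) - g (cnt ys (length ys) x))"
proof -
  let ?c = "\<lambda>j. cnt ys (length ys) j"
  have "(\<Sum>j\<in>set (ys @ [x]). g (cnt (ys @ [x]) (length (ys @ [x])) j))
      = (\<Sum>j\<in>insert x (set ys). g (?c j) + (if j = x then g (?c x + 1) - g (?c x) else 0))"
    by (intro sum.cong) (auto simp: cnt_length_snoc)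
  also have "\<dots> = (\<Sum>j\<in>insert x (set ys). g (?c j)) + (g (?c x + 1) - g (?c x))"
    by (simp add: sum.distrib)
  also have "(\<Sum>j\<in>insert x (set ys). g (?c j)) = (\<Sum>j\<in>set ys. g (?c j))"
    using cnt_length_pos_iff[of ys x] assms by (cases "x \<in> set ys") (auto simp: insert_absorb)
  finally show ?thesis .
qed

section \<open>The potential\<close>

definition xlnx :: "nat \<Rightarrow> real" where
  "xlnx k = real k * ln (real k)"

text \<open>Because ln 0 = 0 and 1 / 0 = 0, stirling_term 0 = 0: a new symbol is the case c = 0 of a
  repeated one.\<close>

definition stirling_term :: "nat \<Rightarrow> real" where
  "stirling_term c = ln (real c) / 2 - 1 / (8 * real c)"

lemma stirling_term_0 [simp]: "stirling_term 0 = 0"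
  by (simp add: stirling_term_def)

lemma xlnx_Suc: "xlnx (k+1) - xlnx k = real k * (ln (real k + 1) - ln (real k)) + ln (real k + 1)"
  by (simp add: xlnx_def algebra_simps)

lemma stirling_term_Suc:
  assumes "1 \<le> c"
  shows "stirling_term (c+1) - stirling_term c
    = (ln (real c + 1) - ln (real c)) / 2 + (1 / (8 * real c) - 1 / (8 * (real c + 1)))"
  unfolding stirling_term_def by (simp add: diff_divide_distrib add.commute)

definition alphabet_potential :: "nat \<Rightarrow> nat \<Rightarrow> real" where
  "alphabet_potential n m = beta_budget n m - (real m - 1) * ln (real m) + 3/8 * real m"

lemma repeat_symbol_increment:
  assumes "1 \<le> c" "1 \<le> m" "m \<le> n"
  shows "(xlnx (c+1) - xlnx c) - (xlnx (n+1) - xlnx n)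
      - ln (real c / (real n + real m / ln (real (n+1) / real m)))
    \<le> (stirling_term (c+1) - stirling_term c) - (ln (real n + 1) - ln (real n)) / 2
      + (alphabet_potential (n+1) m - alphabet_potential n m)"
proof -
  define \<beta> where "\<beta> = real m / ln (real (n+1) / real m)"
  have pos: "0 < real c" "0 < real n" "0 < \<beta>"
    using assms by (auto simp: \<beta>_def field_simps)
  have "(real n + \<beta>) / real n = 1 + \<beta> / real n"
    using pos by (simp add: field_simps)
  then have ln_cond: "ln (real c / (real n + \<beta>)) = ln (real c) - ln (real n) - ln (1 + \<beta> / real n)"
    using pos by (simp add: ln_div flip: \<open>(real n + \<beta>) / real n = 1 + \<beta> / real n\<close>)
  have budget: "ln (1 + \<beta> / real n) \<le> alphabet_potential (n+1) m - alphabet_potential n m"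
    using beta_budget_step_repeat[OF assms(2,3)] by (simp add: \<beta>_def alphabet_potential_def)
  define dC where "dC = ln (real c + 1) - ln (real c)"
  define dN where "dN = ln (real n + 1) - ln (real n)"
  show ?thesis
    unfolding \<beta>_def[symmetric] ln_cond xlnx_Suc stirling_term_Suc[OF assms(1)] dC_def[symmetric] dN_def[symmetric]
    using budget dC_def dN_def
      stirling_increment_bounds[OF pos(1), folded dC_def] stirling_increment_bounds[OF pos(2), folded dN_def]
    by linarith
qed

lemma new_symbol_increment:
  assumes "1 \<le> m" "m \<le> n"
  shows "- (xlnx (n+1) - xlnx n)
      - ln (real m / ln (real (n+1) / real m) / (real n + real m / ln (real (n+1) / real m)))
    \<le> stirling_term 1 - (ln (real n + 1) - ln (real n)) / 2
      + (alphabet_potential (n+1) (m+1) - alphabet_potential n m)"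
proof -
  define L where "L = ln (real (n+1) / real m)"
  have pos: "0 < real m" "0 < real n" "0 < L"
    using assms by (auto simp: L_def field_simps)
  have "real m / L / (real n + real m / L) = real m / (real n * (L + real m / real n))"
    using pos by (simp add: divide_simps mult.commute)
  moreover have "0 < L + real m / real n"
    using pos by (simp add: add_pos_pos)
  ultimately have ln_cond:
      "ln (real m / L / (real n + real m / L)) = ln (real m) - ln (real n) - ln (L + real m / real n)"
    using pos by (simp add: ln_div ln_mult)
  have "real m * ln (1 + 1 / real m) \<le> real m * (1 / real m)"
    using ln_add_one_self_le_self[of "1 / real m"] pos by (intro mult_left_mono) auto
  then have "real m * (ln (real m + 1) - ln (real m)) \<le> 1"
    using pos by (simp add: ln_one_plus_inverse_eq)
  define A where "A = real m * ln (real m + 1) - (real m - 1) * ln (real m)"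
  then have alphabet: "A \<le> 1 + ln (real m)"
    using \<open>real m * (ln (real m + 1) - ln (real m)) \<le> 1\<close> by (simp add: algebra_simps)
  have "stirling_term 1 = - 1/8"
    by (simp add: stirling_term_def)
  moreover have "ln (L + real m / real n) \<le> beta_budget (n+1) (m+1) - beta_budget n m + 1/4"
    using beta_budget_step_new[OF assms] by (simp add: L_def)
  moreover have "alphabet_potential (n+1) (m+1) - alphabet_potential n m
      = beta_budget (n+1) (m+1) - beta_budget n m - A + 3/8"
    by (simp add: alphabet_potential_def A_def algebra_simps)
  moreover note alphabet
  ultimately have increments: "stirling_term 1 + (alphabet_potential (n+1) (m+1) - alphabet_potential n m)
      \<ge> ln (L + real m / real n) - ln (real m) - 1"
    by linarith
  define dN where "dN = ln (real n + 1) - ln (real n)"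
  show ?thesis
    unfolding L_def[symmetric] ln_cond xlnx_Suc dN_def[symmetric]
    using increments dN_def stirling_increment_bounds(1)[OF pos(2), folded dN_def] by linarith
qed

definition ml_log_prob :: "'a list \<Rightarrow> real" where
  "ml_log_prob ys = (\<Sum>j\<in>set ys. xlnx (cnt ys (length ys) j)) - xlnx (length ys)"

text \<open>The right-hand side of the theorem minus CL, with ln n_j / 2 lowered by 1/(8 n_j) and the
  log-log term replaced by the budget.\<close>

definition potential :: "'a list \<Rightarrow> real" where
  "potential ys = (\<Sum>j\<in>set ys. stirling_term (cnt ys (length ys) j)) - ln (real (length ys)) / 2
     + alphabet_potential (length ys) (card (set ys)) - beta_budget 1 1 - 1/4"

lemma redundancy_eq:
  assumes "ys \<noteq> []" "0 < S_seq b0 u v ys"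
  shows "redundancy b0 u v ys = ml_log_prob ys - ln (S_seq b0 u v ys)"
proof -
  let ?n = "length ys" and ?c = "\<lambda>j. cnt ys (length ys) j"
  have n: "0 < real ?n"
    using assms by simp
  have c: "0 < real (?c j)" if "j \<in> set ys" for j
    using that cnt_length_pos_iff[of ys j] by simp
  have "ln (real ?n powi (- int ?n) * (\<Prod>j\<in>set ys. real (?c j) ^ ?c j))
      = ln (inverse (real ?n ^ ?n)) + ln (\<Prod>j\<in>set ys. real (?c j) ^ ?c j)"
    using n c by (simp add: power_int_minus ln_mult prod_pos)
  also have "\<dots> = ml_log_prob ys"
    using n c by (simp add: ml_log_prob_def xlnx_def ln_inverse ln_prod ln_realpow)
  finally show ?thesis
    by (simp add: redundancy_def)
qed

lemma ml_log_prob_snoc: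
  "ml_log_prob (ys @ [x]) = ml_log_prob ys
     + (xlnx (cnt ys (length ys) x + 1) - xlnx (cnt ys (length ys) x)) - (xlnx (length ys + 1) - xlnx (length ys))"
  using sum_counts_snoc[of xlnx ys x] by (simp add: ml_log_prob_def xlnx_def)

lemma potential_snoc:
  "potential (ys @ [x]) = potential ys
     + (stirling_term (cnt ys (length ys) x + 1) - stirling_term (cnt ys (length ys) x))
     - (ln (real (length ys) + 1) - ln (real (length ys))) / 2
     + (alphabet_potential (length ys + 1) (card (set (ys @ [x]))) - alphabet_potential (length ys) (card (set ys)))"
  using sum_counts_snoc[of stirling_term ys x] by (simp add: potential_def add.commute diff_divide_distrib)

lemma redundancy_snoc:
  assumes "0 < b0" "\<And>i. 0 < u i" "\<And>k. 0 < v k" "ys \<noteq> []"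
  shows "redundancy b0 u v (ys @ [x]) = redundancy b0 u v ys
    + (xlnx (cnt ys (length ys) x + 1) - xlnx (cnt ys (length ys) x)) - (xlnx (length ys + 1) - xlnx (length ys))
    - ln (S_cond b0 u v ys (length ys) x)"
proof -
  have S_pos: "0 < S_seq b0 u v zs" for zs
    using S_seq_pos[OF assms(1-3)] .
  have "0 < S_cond b0 u v ys (length ys) x"
    by (rule S_cond_pos) (use assms in auto)
  then show ?thesis
    using redundancy_eq[OF assms(4) S_pos] redundancy_eq[of "ys @ [x]", OF _ S_pos] S_pos[of ys]
    by (simp add: S_seq_snoc ln_mult ml_log_prob_snoc)
qed

lemma redundancy_potential_snoc_repeat:
  assumes "0 < b0" "\<And>i. 0 < u i" "\<And>k. 0 < v k" "ys \<noteq> []" "x \<in> set ys"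
  shows "redundancy b0 u v (ys @ [x]) - CL u v (ys @ [x]) - potential (ys @ [x])
    \<le> redundancy b0 u v ys - CL u v ys - potential ys"
proof -
  define n where "n = length ys"
  define m where "m = card (set ys)"
  define c where "c = cnt ys n x"
  have m: "1 \<le> m" "m \<le> n"
    using msz_bounds[of n ys] assms(4) by (auto simp: n_def m_def msz_length Suc_leI)
  have "1 \<le> c"
    using cnt_length_pos_iff[of ys x] assms(5) by (simp add: c_def n_def)
  then have "S_cond b0 u v ys n x = real c / (real n + real m / ln (real (n+1) / real m))"
    using beta_star_length[OF assms(4)] by (simp add: S_cond_def c_def n_def m_def)
  moreover have "CL u v (ys @ [x]) = CL u v ys" "card (set (ys @ [x])) = m"
    using assms(5) CL_snoc[of u v ys x] by (auto simp: m_def insert_absorb)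
  ultimately show ?thesis
    using redundancy_snoc[of b0 u v ys x, OF assms(1-4)] potential_snoc[of ys x]
      repeat_symbol_increment[OF \<open>1 \<le> c\<close> m]
    by (simp add: c_def n_def m_def)
qed

lemma redundancy_potential_snoc_new:
  assumes "0 < b0" "\<And>i. 0 < u i" "\<And>k. 0 < v k" "ys \<noteq> []" "x \<notin> set ys"
  shows "redundancy b0 u v (ys @ [x]) - CL u v (ys @ [x]) - potential (ys @ [x])
    \<le> redundancy b0 u v ys - CL u v ys - potential ys"
proof -
  define n where "n = length ys"
  define m where "m = card (set ys)"
  define \<beta> where "\<beta> = real m / ln (real (n+1) / real m)"
  define w where "w = wt u v ys n x"
  have m: "1 \<le> m" "m \<le> n"
    using msz_bounds[of n ys] assms(4) by (auto simp: n_def m_def msz_length Suc_leI)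
  have "0 < w"
    using assms(2,3) by (simp add: w_def wt_def)
  have "0 < \<beta>"
    using beta_star_pos[OF assms(1), of n ys] beta_star_length[OF assms(4)] by (simp add: \<beta>_def n_def m_def)
  have "cnt ys n x = 0"
    using cnt_length_pos_iff[of ys x] assms(5) by (simp add: n_def)
  then have "S_cond b0 u v ys n x = \<beta> / (real n + \<beta>) * w"
    using beta_star_length[OF assms(4)] by (simp add: S_cond_def w_def \<beta>_def n_def m_def)
  moreover have "0 < \<beta> / (real n + \<beta>)"
    using \<open>0 < \<beta>\<close> by (intro divide_pos_pos) auto
  ultimately have "ln (S_cond b0 u v ys n x) = ln (\<beta> / (real n + \<beta>)) + ln w"
    using \<open>0 < w\<close> by (simp only: ln_mult_pos)
  \<comment> \<open>the weight w cancels against the code length of the new symbol\<close>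
  moreover have "CL u v (ys @ [x]) = CL u v ys - ln w" "card (set (ys @ [x])) = m + 1"
    using assms(5) CL_snoc[of u v ys x] \<open>0 < w\<close> by (auto simp: m_def w_def n_def ln_div)
  ultimately show ?thesis
    using redundancy_snoc[of b0 u v ys x, OF assms(1-4)] potential_snoc[of ys x] new_symbol_increment[OF m]
      \<open>cnt ys n x = 0\<close>
    by (simp add: \<beta>_def n_def m_def xlnx_def)
qed

lemma redundancy_singleton:
  assumes "0 < b0" "\<And>i. 0 < u i" "\<And>k. 0 < v k"
  shows "redundancy b0 u v [x] = CL u v [x]"
proof -
  have "0 < wt u v [] 0 x"
    using assms by (simp add: wt_def)
  moreover have "S_seq b0 u v [x] = wt u v [] 0 x"
    using assms(1) by (simp add: S_seq_def S_cond_def cnt_def beta_star_def wt_def msz_def alph_def)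
  moreover have "CL u v [x] = ln (1 / wt u v [] 0 x)"
    using CL_snoc[of u v "[]" x] by (simp add: CL_def)
  ultimately show ?thesis
    using redundancy_eq[of "[x]" b0 u v]
    by (simp add: ml_log_prob_def xlnx_def cnt_def ln_div)
qed

lemma potential_singleton: "potential [x] = 0"
  by (simp add: potential_def alphabet_potential_def stirling_term_def cnt_def)

lemma redundancy_le_CL_plus_potential:
  assumes "0 < b0" "\<And>i. 0 < u i" "\<And>k. 0 < v k"
  shows "ys \<noteq> [] \<Longrightarrow> redundancy b0 u v ys \<le> CL u v ys + potential ys"
proof (induction ys rule: rev_induct)
  case (snoc x ys)
  show ?case
  proof (cases "ys = []")
    case True
    then show ?thesis
      using redundancy_singleton[of b0 u v x, OF assms] potential_singleton[of x] by simp
  next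
    case False
    then show ?thesis
      using snoc.IH redundancy_potential_snoc_repeat[of b0 u v ys x, OF assms False]
        redundancy_potential_snoc_new[of b0 u v ys x, OF assms False]
      by (cases "x \<in> set ys") auto
  qed
qed simp

lemma potential_le:
  assumes "ys \<noteq> []"
  shows "potential ys \<le> - (real (card (set ys)) - 1) * ln (card (set ys))
      + (\<Sum>j\<in>set ys. ln (real (cnt ys (length ys) j)) / 2) - ln (real (length ys)) / 2
      + 3/2 * real (card (set ys)) * ln (ln (2 * real (length ys) / real (card (set ys))))
      + 2.33 * real (card (set ys)) + 0.86"
proof -
  define n where "n = length ys"
  define m where "m = card (set ys)"
  define A where "A = - (real m - 1) * ln (real m)"
  define S where "S = (\<Sum>j\<in>set ys. ln (real (cnt ys n j)) / 2)"
  define B where "B = beta_budget n m - beta_budget 1 1 + 3/8 * real m - 1/4"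
  define C where "C = 3/2 * real m * ln (ln (2 * real n / real m))"
  have "1 \<le> m" "m \<le> n"
    using msz_bounds[of n ys] assms by (auto simp: n_def m_def msz_length Suc_leI)
  then have "B \<le> C + 2.33 * real m + 0.86"
    unfolding B_def C_def by (rule beta_budget_final)
  moreover have "(\<Sum>j\<in>set ys. stirling_term (cnt ys n j)) \<le> S"
    unfolding S_def by (intro sum_mono) (simp add: stirling_term_def)
  moreover have "potential ys = (\<Sum>j\<in>set ys. stirling_term (cnt ys n j)) - ln (real n) / 2 + A + B"
    by (simp add: potential_def alphabet_potential_def A_def B_def n_def m_def algebra_simps)
  ultimately have "potential ys \<le> A + S - ln (real n) / 2 + C + 2.33 * real m + 0.86"
    by linarith
  then show ?thesis
    unfolding A_def S_def C_def n_def m_def .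
qed

theorem theorem5:
  fixes xs :: "('a::finite) list" and u :: "'a \<Rightarrow> real" and v :: "nat \<Rightarrow> real" and b0 :: real
  assumes "length xs \<ge> 1"
    and "\<And>i. u i > 0" and "\<And>k. v k > 0"
    and "\<And>t. t \<le> length xs \<Longrightarrow> (\<Sum>k\<in>UNIV - alph xs t. wt u v xs t k) \<le> 1"
    and "b0 > 0"
  shows "redundancy b0 u v xs
    \<le> CL u v xs - (real (card (set xs)) - 1) * ln (card (set xs))
      + (\<Sum>j\<in>set xs. ln (real (cnt xs (length xs) j)) / 2)
      - ln (real (length xs)) / 2
      + 3/2 * real (card (set xs)) * ln (ln (2 * real (length xs) / real (card (set xs))))
      + 2.33 * real (card (set xs)) + 0.86"
proof -
  have "xs \<noteq> []"
    using assms(1) by auto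
  then have "redundancy b0 u v xs \<le> CL u v xs + potential xs"
    by (rule redundancy_le_CL_plus_potential[OF assms(5,2,3)])
  then show ?thesis
    using potential_le[OF \<open>xs \<noteq> []\<close>] by (elim order_trans) (simp add: algebra_simps)
qed

end
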